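(* Let $V$ be a finite set, $A,B\subseteq V$, ${\bf t}=(t_i)_{i\in V}$ and $\lambda$ complex numbers. Then $$\int\mathcal{D}_{B,{\bf t}}(\psi,\bar\psi)\,f_A^{(\lambda)}=\Big(\prod_{i\in B\setminus A}t_i\Big)\Big[f_{A\setminus B}^{(\lambda)}+\Big(\sum_{i\in B\cap A}(t_i-\lambda)\Big)\tau_{A\setminus B}\Big].$$ In particular, $\int\mathcal{D}_{A,{\bf t}}(\psi,\bar\psi)\,f_A^{(\lambda)}=\lambda+\sum_{i\in A}(t_i-\lambda)$.
   Context: For each $i\in V$ let $\psi_i,\bar\psi_i$ be anticommuting generators of a Grassmann algebra over $\mathbb{C}$; $\tau_A=\prod_{i\in A}\bar\psi_i\psi_i$ ($\tau_\emptyset=1$); $f_A^{(\lambda)}=\lambda(1-|A|)\tau_A+\sum_{i\in A}\tau_{A\setminus\{i\}}-\sum_{i,j\in A,\ i\neq j}\bar\psi_i\psi_j\,\tau_{A\setminus\{i,j\}}$ (so $f_\emptyset^{(\lambda)}=\lambda$). For $B\subseteq V$, $\mathcal{D}_{B,{\bf t}}(\psi,\bar\psi)=\prod_{i\in B}d\psi_i\,d\bar\psi_i\,e^{t_i\bar\psi_i\psi_i}$, integrating only over the variables at vertices of $B$, with Berezin conventions $\int d\psi_i\,d\bar\psi_i\,\bar\psi_i\psi_i=1$ and the integral of $1,\psi_i,\bar\psi_i$ equal to $0$. *)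

theory Defs
  imports Complex_Main "HOL-Library.Product_Lexorder"
begin

text \<open>Grassmann algebra over the complex numbers with generators indexed by
  ('v \<times> bool): (i, False) is psi_i and (i, True) is psibar_i.
  An element is represented by its coefficient function on monomials; a monomial
  is a finite set of generators, read as the product of its generators in
  increasing order (lexicographic order on 'v \<times> bool).\<close>

type_synonym 'v grass = "('v \<times> bool) set \<Rightarrow> complex"

definition gzero :: "'v grass" where "gzero = (\<lambda>S. 0)"
definition gconst :: "complex \<Rightarrow> 'v grass" where
  "gconst c = (\<lambda>S. if S = {} then c else 0)"
definition gone :: "'v grass" where "gone = gconst 1"
definition gen :: "'v \<times> bool \<Rightarrow> 'v grass" where
  "gen g = (\<lambda>S. if S = {g} then 1 else 0)"
definition gadd :: "'v grass \<Rightarrow> 'v grass \<Rightarrow> 'v grass" where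
  "gadd F G = (\<lambda>S. F S + G S)"
definition gsmult :: "complex \<Rightarrow> 'v grass \<Rightarrow> 'v grass" where
  "gsmult c F = (\<lambda>S. c * F S)"
definition gminus :: "'v grass \<Rightarrow> 'v grass \<Rightarrow> 'v grass" where
  "gminus F G = (\<lambda>S. F S - G S)"
definition gsum :: "('i \<Rightarrow> 'v grass) \<Rightarrow> 'i set \<Rightarrow> 'v grass" where
  "gsum f I = (\<lambda>S. \<Sum>i\<in>I. f i S)"

text \<open>Number of transpositions needed to bring (monomial T)(monomial U) into
  increasing order.\<close>
definition ginv :: "('v::linorder \<times> bool) set \<Rightarrow> ('v \<times> bool) set \<Rightarrow> nat" where
  "ginv T U = card {(a, b). a \<in> T \<and> b \<in> U \<and> b < a}"

definition gmul :: "'v::linorder grass \<Rightarrow> 'v grass \<Rightarrow> 'v grass" where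
  "gmul F G = (\<lambda>S. if finite S then
      (\<Sum>T\<in>Pow S. (-1) ^ ginv T (S - T) * F T * G (S - T)) else 0)"

definition gpow :: "'v::linorder grass \<Rightarrow> nat \<Rightarrow> 'v grass" where
  "gpow F k = (gmul F ^^ k) gone"

definition gprod :: "('v::linorder \<Rightarrow> 'v grass) \<Rightarrow> 'v set \<Rightarrow> 'v grass" where
  "gprod f A = foldr gmul (map f (sorted_list_of_set A)) gone"

text \<open>Exponential; for F without constant term the series terminates:
  on a monomial S only the powers k \<le> card S contribute.\<close>
definition gexp :: "'v::linorder grass \<Rightarrow> 'v grass" where
  "gexp F = (\<lambda>S. \<Sum>k\<le>card S. gpow F k S / of_nat (fact k))"

definition psi :: "'v \<Rightarrow> 'v grass" where "psi i = gen (i, False)"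
definition psibar :: "'v \<Rightarrow> 'v grass" where "psibar i = gen (i, True)"

definition tau :: "'v::linorder set \<Rightarrow> 'v grass" where
  "tau A = gprod (\<lambda>i. gmul (psibar i) (psi i)) A"

definition fA :: "complex \<Rightarrow> 'v::linorder set \<Rightarrow> 'v grass" where
  "fA lam A = gminus
     (gadd (gsmult (lam * (1 - of_nat (card A))) (tau A)) (gsum (\<lambda>i. tau (A - {i})) A))
     (gsum (\<lambda>(i, j). gmul (gmul (psibar i) (psi j)) (tau (A - {i, j})))
           {(i, j). i \<in> A \<and> j \<in> A \<and> i \<noteq> j})"

text \<open>Left derivative with respect to generator g; Berezin integration
  \<open>\<integral> d\<psi>_i d\<psibar>_i\<close> is \<open>\<partial>_{\<psi>_i} \<partial>_{\<psibar>_i}\<close>,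
  so that the integral of psibar_i psi_i is 1 and of 1, psi_i, psibar_i is 0.\<close>
definition gderiv :: "'v::linorder \<times> bool \<Rightarrow> 'v grass \<Rightarrow> 'v grass" where
  "gderiv g F = (\<lambda>S. if g \<notin> S then (-1) ^ card {h\<in>S. h < g} * F (insert g S) else 0)"

definition berezin1 :: "'v::linorder \<Rightarrow> 'v grass \<Rightarrow> 'v grass" where
  "berezin1 i F = gderiv (i, False) (gderiv (i, True) F)"

text \<open>\<open>\<integral> D_{B,t} F\<close>: multiply by the weight
  \<open>\<Prod>_{i\<in>B} e^{t_i psibar_i psi_i}\<close> and integrate over the variables at B.\<close>
definition berezin :: "'v::linorder set \<Rightarrow> ('v \<Rightarrow> complex) \<Rightarrow> 'v grass \<Rightarrow> 'v grass" where
  "berezin B t F = foldr berezin1 (sorted_list_of_set B)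
     (gmul (gprod (\<lambda>i. gexp (gsmult (t i) (gmul (psibar i) (psi i)))) B) F)"

end

theory Submission
  imports Defs
begin

text \<open>Since \<open>(\<psibar>\<^sub>i \<psi>\<^sub>i)\<^sup>2 = 0\<close>, the weight \<open>exp (t\<^sub>i \<psibar>\<^sub>i \<psi>\<^sub>i)\<close> is
  \<open>1 + t\<^sub>i \<psibar>\<^sub>i \<psi>\<^sub>i\<close>, so integrating over the vertices of B acts on monomials as
  follows: a monomial carrying both generators at the vertices of \<open>E \<inter> B\<close> and none at
  the other vertices of B loses these generators and picks up the factor
  \<open>\<Prod>i\<in>B - E. t\<^sub>i\<close>, while a monomial carrying exactly one of \<open>\<psi>\<^sub>i, \<psibar>\<^sub>i\<close> for some
  \<open>i \<in> B\<close> integrates to zero. Applied term by term to \<open>f\<^sub>A\<close>: \<open>\<tau>\<^sub>A\<close> gives \<open>\<tau>\<^sub>A\<^sub>-\<^sub>B\<close>, each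
  \<open>\<tau>\<^sub>A\<^sub>-\<^sub>{\<^sub>i\<^sub>}\<close> with \<open>i \<in> A \<inter> B\<close> gives \<open>t\<^sub>i \<tau>\<^sub>A\<^sub>-\<^sub>B\<close>, the off-diagonal terms survive only
  for \<open>i, j \<notin> B\<close>, and splitting \<open>\<lambda>(1 - |A|) = \<lambda>(1 - |A - B|) - \<lambda>|A \<inter> B|\<close> yields
  the formula.\<close>

definition gmonomial :: "('v \<times> bool) set \<Rightarrow> complex \<Rightarrow> 'v grass" where
  "gmonomial M c = (\<lambda>S. if S = M then c else 0)"

definition vertex_gens :: "'v set \<Rightarrow> ('v \<times> bool) set" where
  "vertex_gens C = C \<times> UNIV"

lemma vertex_gens_empty [simp]: "vertex_gens {} = {}"
  by (simp add: vertex_gens_def)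

lemma finite_vertex_gens [simp]: "finite C \<Longrightarrow> finite (vertex_gens C)"
  by (simp add: vertex_gens_def)

lemma vertex_gens_insert: "vertex_gens (insert x C) = vertex_gens {x} \<union> vertex_gens C"
  by (auto simp: vertex_gens_def)

lemma vertex_gens_singleton: "vertex_gens {i} = {(i, False), (i, True)}"
  by (auto simp: vertex_gens_def)

lemma vertex_gens_inject: "vertex_gens C = vertex_gens D \<Longrightarrow> C = D"
  by (auto simp: vertex_gens_def)

lemma gone_eq_gmonomial: "gone = gmonomial {} 1"
  by (auto simp: gone_def gconst_def gmonomial_def)

lemma gen_eq_gmonomial: "gen g = gmonomial {g} 1"
  by (auto simp: gen_def gmonomial_def)

lemma gsmult_gmonomial: "gsmult c (gmonomial M d) = gmonomial M (c * d)"
  by (auto simp: gsmult_def gmonomial_def)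

lemma ginv_empty_right [simp]: "ginv M {} = 0"
  by (simp add: ginv_def)

lemma ginv_empty_left [simp]: "ginv {} M = 0"
  by (simp add: ginv_def)

lemma gmul_gmonomial_left_apply:
  "gmul (gmonomial M c) G S =
     (if finite S \<and> M \<subseteq> S then (-1) ^ ginv M (S - M) * c * G (S - M) else 0)"
proof (cases "finite S")
  case True
  have "gmul (gmonomial M c) G S =
      (\<Sum>T\<in>Pow S. if M = T then (-1) ^ ginv M (S - M) * c * G (S - M) else 0)"
    unfolding gmul_def if_P[OF True] by (rule sum.cong) (auto simp: gmonomial_def)
  then show ?thesis
    using True by simp
qed (simp add: gmul_def)

lemma gmul_gmonomial:
  "gmul (gmonomial M c) (gmonomial N d) =
     (if M \<inter> N = {} \<and> finite M \<and> finite N then gmonomial (M \<union> N) ((-1) ^ ginv M N * c * d)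
      else gzero)"
  by (rule ext, unfold gmul_gmonomial_left_apply) (auto simp: gmonomial_def gzero_def Diff_triv)

text \<open>Both generators at a vertex are moved past together, so the sign is even.\<close>

lemma even_ginv_vertex_gens_right:
  fixes X :: "('v::linorder \<times> bool) set"
  assumes "X \<inter> vertex_gens E = {}"
  shows "even (ginv X (vertex_gens E))"
proof -
  define R where "R = {(a, k). a \<in> X \<and> k \<in> E \<and> (k, False) < a}"
  have "bij_betw (\<lambda>((a, k), v). (a, (k, v))) (R \<times> UNIV)
      {(a, b). a \<in> X \<and> b \<in> vertex_gens E \<and> b < a}"
    by (rule bij_betw_byWitness[where f' = "\<lambda>(a, (k, v)). ((a, k), v)"])
       (use assms in \<open>auto simp: R_def vertex_gens_def less_prod_def less_bool_def\<close>)
  then have "ginv X (vertex_gens E) = card (R \<times> (UNIV :: bool set))"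
    unfolding ginv_def by (simp add: bij_betw_same_card)
  then show ?thesis
    by (simp add: card_cartesian_product)
qed

lemma even_ginv_vertex_gens_left:
  fixes Y :: "('v::linorder \<times> bool) set"
  assumes "Y \<inter> vertex_gens C = {}"
  shows "even (ginv (vertex_gens C) Y)"
proof -
  define R where "R = {(k, b). b \<in> Y \<and> k \<in> C \<and> b < (k, False)}"
  have "bij_betw (\<lambda>((k, b), v). ((k, v), b)) (R \<times> UNIV)
      {(a, b). a \<in> vertex_gens C \<and> b \<in> Y \<and> b < a}"
    by (rule bij_betw_byWitness[where f' = "\<lambda>((k, v), b). ((k, b), v)"])
       (use assms in \<open>auto simp: R_def vertex_gens_def less_prod_def less_bool_def\<close>)
  then have "ginv (vertex_gens C) Y = card (R \<times> (UNIV :: bool set))"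
    unfolding ginv_def by (simp add: bij_betw_same_card)
  then show ?thesis
    by (simp add: card_cartesian_product)
qed

lemma gmul_vertex_gens_gmonomial:
  assumes "X \<inter> vertex_gens C = {}" "finite X" "finite C"
  shows "gmul (gmonomial (vertex_gens C) c) (gmonomial X d) = gmonomial (vertex_gens C \<union> X) (c * d)"
  using assms even_ginv_vertex_gens_left[of X C] by (simp add: gmul_gmonomial Int_commute)

lemma gmul_psibar_psi: "gmul (psibar i) (psi i) = gmonomial (vertex_gens {i}) (-1)"
proof -
  have "{(a, b). a \<in> {(i, True)} \<and> b \<in> {(i, False)} \<and> b < a} = {((i, True), (i, False))}"
    by (auto simp: less_prod_def less_bool_def)
  then have "ginv {(i, True)} {(i, False)} = 1"
    by (simp add: ginv_def)
  then show ?thesis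
    by (simp add: psibar_def psi_def gen_eq_gmonomial gmul_gmonomial vertex_gens_singleton
        insert_commute)
qed

lemma foldr_gmul_psibar_psi:
  "distinct xs \<Longrightarrow> foldr gmul (map (\<lambda>i. gmul (psibar i) (psi i)) xs) gone =
     gmonomial (vertex_gens (set xs)) ((-1) ^ length xs)"
proof (induction xs)
  case Nil
  then show ?case
    by (simp add: gone_eq_gmonomial)
next
  case (Cons x xs)
  then have "vertex_gens (set xs) \<inter> vertex_gens {x} = {}"
    by (auto simp: vertex_gens_def)
  with Cons show ?case
    by (simp add: gmul_psibar_psi gmul_vertex_gens_gmonomial vertex_gens_insert[of x "set xs"])
qed

lemma tau_eq_gmonomial: "finite A \<Longrightarrow> tau A = gmonomial (vertex_gens A) ((-1) ^ card A)"
  unfolding tau_def gprod_def by (simp add: foldr_gmul_psibar_psi)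

lemma gmul_gzero_right: "gmul F gzero = gzero"
  by (auto simp: gmul_def gzero_def)

lemma gpow_gmonomial:
  assumes "finite M" "M \<noteq> {}"
  shows "gpow (gmonomial M a) 0 = gone"
    and "gpow (gmonomial M a) (Suc 0) = gmonomial M a"
    and "gpow (gmonomial M a) (Suc (Suc k)) = gzero"
proof -
  show "gpow (gmonomial M a) 0 = gone"
    by (simp add: gpow_def)
  show one: "gpow (gmonomial M a) (Suc 0) = gmonomial M a"
    using assms by (simp add: gpow_def gone_eq_gmonomial gmul_gmonomial)
  show "gpow (gmonomial M a) (Suc (Suc k)) = gzero"
  proof (induction k)
    case 0
    then show ?case
      using one assms by (simp add: gpow_def gmul_gmonomial)
  next
    case (Suc k)
    then show ?case
      by (simp add: gpow_def gmul_gzero_right)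
  qed
qed

lemma sum_atMost_vanishing_from_two:
  assumes "\<And>k. g (Suc (Suc k)) = (0::'a::comm_monoid_add)"
  shows "(\<Sum>k\<le>n. g k) = g 0 + (if 1 \<le> n then g 1 else 0)"
proof (induction n)
  case (Suc n)
  then show ?case
    by (cases n) (auto simp: assms)
qed simp

lemma gexp_gmonomial:
  assumes "finite M" "M \<noteq> {}"
  shows "gexp (gmonomial M a) = gadd gone (gmonomial M a)"
proof (rule ext)
  fix S
  have "gexp (gmonomial M a) S = gone S + (if 1 \<le> card S then gmonomial M a S else 0)"
    unfolding gexp_def
    by (subst sum_atMost_vanishing_from_two) (simp_all add: gpow_gmonomial[OF assms] gzero_def)
  also have "\<dots> = gadd gone (gmonomial M a) S"
    using assms by (cases "S = M") (auto simp: gadd_def gmonomial_def Suc_le_eq card_gt_0_iff)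
  finally show "gexp (gmonomial M a) S = gadd gone (gmonomial M a) S" .
qed

lemma gmul_gadd_left: "gmul (gadd F G) H = gadd (gmul F H) (gmul G H)"
  by (auto simp: gmul_def gadd_def sum.distrib algebra_simps)

lemma gmul_gsum_right: "finite I \<Longrightarrow> gmul F (gsum h I) = gsum (\<lambda>x. gmul F (h x)) I"
  by (rule ext) (auto simp: gmul_def gsum_def sum_distrib_left intro: sum.swap)

lemma gmul_gsum_left: "finite I \<Longrightarrow> gmul (gsum h I) F = gsum (\<lambda>x. gmul (h x) F) I"
  by (rule ext) (auto simp: gmul_def gsum_def sum_distrib_left sum_distrib_right intro: sum.swap)

lemma gsum_cong: "(\<And>x. x \<in> I \<Longrightarrow> h x = h' x) \<Longrightarrow> gsum h I = gsum h' I"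
  by (auto simp: gsum_def intro!: sum.cong ext)

lemma foldr_gmul_weight_factors:
  "distinct xs \<Longrightarrow>
     foldr gmul (map (\<lambda>i. gadd gone (gmonomial (vertex_gens {i}) (- t i))) xs) gone =
     gsum (\<lambda>C. gmonomial (vertex_gens C) (\<Prod>i\<in>C. - t i)) (Pow (set xs))"
proof (induction xs)
  case Nil
  then show ?case
    by (auto simp: gone_eq_gmonomial gsum_def)
next
  case (Cons x xs)
  let ?W = "\<lambda>D. gsum (\<lambda>C. gmonomial (vertex_gens C) (\<Prod>i\<in>C. - t i)) D"
  have one: "gmul gone (?W (Pow (set xs))) = ?W (Pow (set xs))"
    unfolding gmul_gsum_right[OF finite_Pow_iff[THEN iffD2, OF finite_set]]
    by (rule gsum_cong) (auto simp: gone_eq_gmonomial gmul_gmonomial dest: finite_subset)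
  have factor: "gmul (gmonomial (vertex_gens {x}) (- t x)) (?W (Pow (set xs))) =
      gsum (\<lambda>C. gmonomial (vertex_gens (insert x C)) (\<Prod>i\<in>insert x C. - t i)) (Pow (set xs))"
    unfolding gmul_gsum_right[OF finite_Pow_iff[THEN iffD2, OF finite_set]]
  proof (rule gsum_cong)
    fix C assume "C \<in> Pow (set xs)"
    then have "x \<notin> C" "finite C" "vertex_gens C \<inter> vertex_gens {x} = {}"
      using Cons.prems by (auto intro: finite_subset simp: vertex_gens_def)
    then show "gmul (gmonomial (vertex_gens {x}) (- t x)) (gmonomial (vertex_gens C) (\<Prod>i\<in>C. - t i)) =
        gmonomial (vertex_gens (insert x C)) (\<Prod>i\<in>insert x C. - t i)"
      by (simp add: gmul_vertex_gens_gmonomial vertex_gens_insert[of x C])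
  qed
  have "inj_on (insert x) (Pow (set xs))" "Pow (set xs) \<inter> insert x ` Pow (set xs) = {}"
    using Cons.prems by (auto simp: inj_on_def insert_ident)
  then have split: "?W (Pow (insert x (set xs))) = gadd (?W (Pow (set xs)))
      (gsum (\<lambda>C. gmonomial (vertex_gens (insert x C)) (\<Prod>i\<in>insert x C. - t i)) (Pow (set xs)))"
    unfolding Pow_insert gsum_def gadd_def
    by (intro ext, subst sum.union_disjoint) (auto simp: sum.reindex)
  show ?case
    using Cons by (simp add: gmul_gadd_left one factor split)
qed

lemma weight_expansion:
  "finite B \<Longrightarrow> gprod (\<lambda>i. gexp (gsmult (t i) (gmul (psibar i) (psi i)))) B =
     gsum (\<lambda>C. gmonomial (vertex_gens C) (\<Prod>i\<in>C. - t i)) (Pow B)"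
  unfolding gprod_def
  by (simp add: gmul_psibar_psi gsmult_gmonomial gexp_gmonomial vertex_gens_singleton
      foldr_gmul_weight_factors[unfolded vertex_gens_singleton])

definition finitely_supported :: "'v grass \<Rightarrow> bool" where
  "finitely_supported G \<longleftrightarrow> (\<forall>S. infinite S \<longrightarrow> G S = 0)"

lemma finitely_supported_gmul: "finitely_supported (gmul F G)"
  by (simp add: finitely_supported_def gmul_def)

lemma berezin1_apply:
  fixes G :: "'v::linorder grass"
  assumes "finitely_supported G"
  shows "berezin1 i G S =
    (if S \<inter> vertex_gens {i} = {} then - G (S \<union> vertex_gens {i}) else 0)"
proof (cases "S \<inter> vertex_gens {i} = {}")
  case disj: True
  have U: "insert (i, True) (insert (i, False) S) = S \<union> vertex_gens {i}"
    by (auto simp: vertex_gens_singleton)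
  show ?thesis
  proof (cases "finite S")
    case True
    have "{h. (h = (i, False) \<or> h \<in> S) \<and> h < (i, True)} = insert (i, False) {h \<in> S. h < (i, False)}"
      using disj by (auto simp: vertex_gens_singleton less_prod_def less_bool_def)
    then have "card {h. (h = (i, False) \<or> h \<in> S) \<and> h < (i, True)} =
        Suc (card {h \<in> S. h < (i, False)})"
      using disj True by (simp add: vertex_gens_singleton)
    then show ?thesis
      using disj by (simp add: berezin1_def gderiv_def U vertex_gens_singleton)
  next
    case False
    then show ?thesis
      using disj assms by (simp add: berezin1_def gderiv_def U finitely_supported_def vertex_gens_singleton)
  qed
qed (auto simp: berezin1_def gderiv_def vertex_gens_singleton)

lemma foldr_berezin1_apply:
  fixes G :: "'v::linorder grass"
  assumes "distinct xs" "finitely_supported G"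
  shows "foldr berezin1 xs G S =
    (if S \<inter> vertex_gens (set xs) = {} then (-1) ^ length xs * G (S \<union> vertex_gens (set xs)) else 0)"
  using assms(1)
proof (induction xs arbitrary: S)
  case (Cons x xs)
  have "finitely_supported (foldr berezin1 xs G)"
    using Cons assms(2) by (auto simp: finitely_supported_def)
  moreover have "S \<union> vertex_gens {x} \<union> vertex_gens (set xs) = S \<union> vertex_gens (set (x # xs))"
    by (auto simp: vertex_gens_def)
  moreover have "(S \<inter> vertex_gens {x} = {} \<and> (S \<union> vertex_gens {x}) \<inter> vertex_gens (set xs) = {}) =
      (S \<inter> vertex_gens (set (x # xs)) = {})"
    using Cons.prems by (auto simp: vertex_gens_def)
  ultimately show ?case
    using Cons by (auto simp: berezin1_apply)
qed simp

text \<open>The summand of the expanded weight indexed by \<open>C \<subseteq> B\<close> supplies both generators at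
  the vertices of C, so F has to supply those at the vertices of \<open>B - C\<close>.\<close>

lemma berezin_apply:
  fixes F :: "'v::linorder grass"
  assumes "finite B"
  shows "berezin B t F S = (if S \<inter> vertex_gens B = {} \<and> finite S then
      (-1) ^ card B * (\<Sum>C\<in>Pow B. (\<Prod>i\<in>C. - t i) * F (S \<union> vertex_gens (B - C))) else 0)"
proof -
  let ?W = "gsum (\<lambda>C. gmonomial (vertex_gens C) (\<Prod>i\<in>C. - t i)) (Pow B)"
  have integral: "berezin B t F S =
      (if S \<inter> vertex_gens B = {} then (-1) ^ card B * gmul ?W F (S \<union> vertex_gens B) else 0)"
    unfolding berezin_def weight_expansion[OF assms]
    by (simp add: foldr_berezin1_apply finitely_supported_gmul assms)
  show ?thesis
  proof (cases "S \<inter> vertex_gens B = {} \<and> finite S")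
    case True
    have "gmul ?W F (S \<union> vertex_gens B) =
        (\<Sum>C\<in>Pow B. gmul (gmonomial (vertex_gens C) (\<Prod>i\<in>C. - t i)) F (S \<union> vertex_gens B))"
      by (subst gmul_gsum_left) (simp_all add: assms gsum_def)
    also have "\<dots> = (\<Sum>C\<in>Pow B. (\<Prod>i\<in>C. - t i) * F (S \<union> vertex_gens (B - C)))"
    proof (rule sum.cong)
      fix C assume C: "C \<in> Pow B"
      then have "(S \<union> vertex_gens B) - vertex_gens C = S \<union> vertex_gens (B - C)"
        "vertex_gens C \<subseteq> S \<union> vertex_gens B"
        using True by (auto simp: vertex_gens_def)
      moreover have "even (ginv (vertex_gens C) (S \<union> vertex_gens (B - C)))"
        by (rule even_ginv_vertex_gens_left) (use True C in \<open>auto simp: vertex_gens_def\<close>)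
      ultimately show "gmul (gmonomial (vertex_gens C) (\<Prod>i\<in>C. - t i)) F (S \<union> vertex_gens B) =
          (\<Prod>i\<in>C. - t i) * F (S \<union> vertex_gens (B - C))"
        using True assms by (simp add: gmul_gmonomial_left_apply)
    qed simp
    finally show ?thesis
      using True integral by simp
  qed (use integral in \<open>auto simp: gmul_def\<close>)
qed

lemma berezin_gadd: "finite B \<Longrightarrow> berezin B t (gadd F G) = gadd (berezin B t F) (berezin B t G)"
  by (auto simp: berezin_apply gadd_def sum.distrib algebra_simps)

lemma berezin_gminus:
  "finite B \<Longrightarrow> berezin B t (gminus F G) = gminus (berezin B t F) (berezin B t G)"
  by (auto simp: berezin_apply gminus_def sum_subtractf algebra_simps)

lemma berezin_gsmult: "finite B \<Longrightarrow> berezin B t (gsmult c F) = gsmult c (berezin B t F)"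
  by (auto simp: berezin_apply gsmult_def sum_distrib_left algebra_simps)

lemma berezin_gsum:
  assumes "finite B" "finite I"
  shows "berezin B t (gsum h I) = gsum (\<lambda>x. berezin B t (h x)) I"
proof (rule ext)
  fix S
  show "berezin B t (gsum h I) S = gsum (\<lambda>x. berezin B t (h x)) I S"
  proof (cases "S \<inter> vertex_gens B = {} \<and> finite S")
    case True
    have "(\<Sum>x\<in>I. \<Sum>C\<in>Pow B. (\<Prod>i\<in>C. - t i) * h x (S \<union> vertex_gens (B - C))) =
        (\<Sum>C\<in>Pow B. (\<Prod>i\<in>C. - t i) * (\<Sum>x\<in>I. h x (S \<union> vertex_gens (B - C))))"
      by (subst sum.swap) (simp add: sum_distrib_left)
    with True assms show ?thesis
      by (simp add: berezin_apply gsum_def sum_distrib_left[symmetric])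
  next
    case False
    then show ?thesis
      unfolding berezin_apply[OF assms(1)] gsum_def by (simp only: if_not_P if_False sum.neutral_const)
  qed
qed

lemma union_vertex_gens_eq_iff:
  assumes "S \<inter> vertex_gens B = {}" "C \<subseteq> B" "X \<inter> vertex_gens B = {}"
  shows "S \<union> vertex_gens (B - C) = X \<union> vertex_gens E \<longleftrightarrow>
    C = B - E \<and> S = X \<union> vertex_gens (E - B)"
proof
  assume eq: "S \<union> vertex_gens (B - C) = X \<union> vertex_gens E"
  have "vertex_gens (B - C) = (S \<union> vertex_gens (B - C)) \<inter> vertex_gens B"
    "vertex_gens (E \<inter> B) = (X \<union> vertex_gens E) \<inter> vertex_gens B"
    using assms by (auto simp: vertex_gens_def)
  then have "B - C = E \<inter> B"
    using eq by (metis vertex_gens_inject)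
  moreover have "S = (S \<union> vertex_gens (B - C)) - vertex_gens B"
    "X \<union> vertex_gens (E - B) = (X \<union> vertex_gens E) - vertex_gens B"
    using assms by (auto simp: vertex_gens_def)
  ultimately show "C = B - E \<and> S = X \<union> vertex_gens (E - B)"
    using eq assms(2) by auto
qed (auto simp: vertex_gens_def)

text \<open>The sign \<open>(-1) ^ card E\<close> of \<open>\<tau>\<^sub>E\<close> is carried along so that the signs coming from the
  integrals and from the factors \<open>-t\<^sub>i\<close> cancel.\<close>

lemma berezin_gmonomial:
  fixes X :: "('v::linorder \<times> bool) set"
  assumes "finite B" "finite E" "finite X" "X \<inter> vertex_gens B = {}"
  shows "berezin B t (gmonomial (X \<union> vertex_gens E) ((-1) ^ card E * d)) =
    gmonomial (X \<union> vertex_gens (E - B)) ((\<Prod>i\<in>B - E. t i) * ((-1) ^ card (E - B) * d))"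
proof (rule ext)
  fix S :: "('v \<times> bool) set"
  have sign: "(-1) ^ card B * (\<Prod>i\<in>B - E. - t i) * ((-1) ^ card E * d) =
      (\<Prod>i\<in>B - E. t i) * ((-1) ^ card (E - B) * d)"
  proof -
    have "card B = card (B \<inter> E) + card (B - E)" "card E = card (B \<inter> E) + card (E - B)"
      using assms card_Int_Diff[of B E] card_Int_Diff[of E B] by (auto simp: Int_commute)
    then show ?thesis
      by (simp add: prod_uminus power_add algebra_simps)
  qed
  show "berezin B t (gmonomial (X \<union> vertex_gens E) ((-1) ^ card E * d)) S =
      gmonomial (X \<union> vertex_gens (E - B)) ((\<Prod>i\<in>B - E. t i) * ((-1) ^ card (E - B) * d)) S"
  proof (cases "S \<inter> vertex_gens B = {} \<and> finite S")
    case True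
    have "(\<Sum>C\<in>Pow B. (\<Prod>i\<in>C. - t i) *
          gmonomial (X \<union> vertex_gens E) ((-1) ^ card E * d) (S \<union> vertex_gens (B - C))) =
        (\<Sum>C\<in>Pow B. if C = B - E then
          (if S = X \<union> vertex_gens (E - B) then (\<Prod>i\<in>C. - t i) * ((-1) ^ card E * d) else 0) else 0)"
      by (rule sum.cong) (use True assms union_vertex_gens_eq_iff[of S B _ X E]
          in \<open>auto simp: gmonomial_def\<close>)
    then show ?thesis
      using True assms sign by (simp add: berezin_apply gmonomial_def)
  next
    case False
    moreover have "(X \<union> vertex_gens (E - B)) \<inter> vertex_gens B = {}"
      using assms by (auto simp: vertex_gens_def)
    ultimately show ?thesis
      using assms by (auto simp: berezin_apply gmonomial_def)
  qed
qed

lemma berezin_gmonomial_unpaired: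
  assumes "finite B" "k \<in> B" "(k, False) \<in> M \<longleftrightarrow> (k, True) \<notin> M"
  shows "berezin B t (gmonomial M c) = gzero"
proof -
  have "S \<union> vertex_gens (B - C) \<noteq> M" if "C \<subseteq> B" "S \<inter> vertex_gens B = {}" for S C
    using that assms by (cases "k \<in> C") (auto simp: vertex_gens_def)
  then show ?thesis
    using assms(1) by (auto simp: berezin_apply gmonomial_def gzero_def)
qed

lemma berezin_tau:
  assumes "finite B" "finite E"
  shows "berezin B t (tau E) = gsmult (\<Prod>i\<in>B - E. t i) (tau (E - B))"
  using berezin_gmonomial[of B E "{}" t 1] assms
  by (simp add: tau_eq_gmonomial gsmult_gmonomial)

lemma psibar_psi_tau_eq_gmonomial:
  assumes "finite E" "i \<notin> E" "j \<notin> E"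
  shows "gmul (gmul (psibar i) (psi j)) (tau E) = gmonomial ({(i, True), (j, False)} \<union> vertex_gens E)
     ((-1) ^ card E * (-1) ^ ginv {(i, True)} {(j, False)})"
proof -
  have "{(i, True), (j, False)} \<inter> vertex_gens E = {}"
    using assms by (auto simp: vertex_gens_def)
  with even_ginv_vertex_gens_right[OF this] show ?thesis
    using assms by (simp add: psibar_def psi_def gen_eq_gmonomial gmul_gmonomial tau_eq_gmonomial
        insert_commute mult.commute)
qed

lemma berezin_psibar_psi_tau:
  assumes "finite B" "finite E" "i \<notin> E" "j \<notin> E" "i \<noteq> j"
  shows "berezin B t (gmul (gmul (psibar i) (psi j)) (tau E)) =
    (if i \<in> B \<or> j \<in> B then gzero
     else gsmult (\<Prod>i\<in>B - E. t i) (gmul (gmul (psibar i) (psi j)) (tau (E - B))))"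
proof (cases "i \<in> B \<or> j \<in> B")
  case True
  then obtain k where "k \<in> B" "k = i \<or> k = j"
    by blast
  then show ?thesis
    using assms by (auto simp: psibar_psi_tau_eq_gmonomial vertex_gens_def
        intro!: berezin_gmonomial_unpaired)
next
  case False
  then have "{(i, True), (j, False)} \<inter> vertex_gens B = {}"
    by (auto simp: vertex_gens_def)
  with False assms show ?thesis
    using berezin_gmonomial[of B E "{(i, True), (j, False)}" t "(-1) ^ ginv {(i, True)} {(j, False)}"]
    by (simp add: psibar_psi_tau_eq_gmonomial gsmult_gmonomial)
qed

lemma finite_off_diagonal: "finite A \<Longrightarrow> finite {(i, j). i \<in> A \<and> j \<in> A \<and> i \<noteq> j}"
  by (rule finite_subset[of _ "A \<times> A"]) auto

lemma berezin_sum_tau_remove: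
  assumes "finite A" "finite B"
  shows "gsum (\<lambda>i. berezin B t (tau (A - {i}))) A =
    gsmult (\<Prod>i\<in>B - A. t i)
      (gadd (gsum (\<lambda>i. tau (A - B - {i})) (A - B)) (gsmult (\<Sum>i\<in>A \<inter> B. t i) (tau (A - B))))"
proof (rule ext)
  fix S
  let ?P = "\<Prod>i\<in>B - A. t i"
  let ?g = "\<lambda>i. (\<Prod>i\<in>B - (A - {i}). t i) * tau (A - {i} - B) S"
  have outside: "?g i = ?P * tau (A - B - {i}) S" if "i \<in> A - B" for i
  proof -
    have "B - (A - {i}) = B - A" "A - {i} - B = A - B - {i}"
      using that by auto
    then show ?thesis
      by simp
  qed
  have inside: "?g i = t i * (?P * tau (A - B) S)" if "i \<in> A \<inter> B" for i
  proof -
    have "B - (A - {i}) = insert i (B - A)" "A - {i} - B = A - B"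
      using that by auto
    then show ?thesis
      using that assms by simp
  qed
  have "(\<Sum>i\<in>A. ?g i) = (\<Sum>i\<in>A \<inter> B. t i * (?P * tau (A - B) S)) + (\<Sum>i\<in>A - B. ?P * tau (A - B - {i}) S)"
    using assms by (simp add: sum.Int_Diff[of A ?g B] outside inside)
  then show "gsum (\<lambda>i. berezin B t (tau (A - {i}))) A S = gsmult ?P
      (gadd (gsum (\<lambda>i. tau (A - B - {i})) (A - B)) (gsmult (\<Sum>i\<in>A \<inter> B. t i) (tau (A - B)))) S"
    using assms by (simp add: berezin_tau gsum_def gsmult_def gadd_def sum_distrib_left
        sum_distrib_right algebra_simps)
qed

lemma berezin_sum_psibar_psi_tau:
  assumes "finite A" "finite B"
  shows "gsum (\<lambda>p. berezin B t (case p of (i, j) \<Rightarrow> gmul (gmul (psibar i) (psi j)) (tau (A - {i, j}))))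
      {(i, j). i \<in> A \<and> j \<in> A \<and> i \<noteq> j} =
    gsmult (\<Prod>i\<in>B - A. t i)
      (gsum (\<lambda>(i, j). gmul (gmul (psibar i) (psi j)) (tau (A - B - {i, j})))
        {(i, j). i \<in> A - B \<and> j \<in> A - B \<and> i \<noteq> j})"
proof (rule ext)
  fix S
  let ?pairs = "\<lambda>A. {(i, j). i \<in> A \<and> j \<in> A \<and> i \<noteq> j}"
  let ?integrated = "\<lambda>p. berezin B t (case p of (i, j) \<Rightarrow> gmul (gmul (psibar i) (psi j)) (tau (A - {i, j}))) S"
  have "?integrated p = 0" if "p \<in> ?pairs A - ?pairs (A - B)" for p
    using that assms by (auto simp: berezin_psibar_psi_tau gzero_def)
  moreover have "?integrated p =
      (\<Prod>i\<in>B - A. t i) * (case p of (i, j) \<Rightarrow> gmul (gmul (psibar i) (psi j)) (tau (A - B - {i, j}))) S"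
    if off_B: "p \<in> ?pairs (A - B)" for p
  proof -
    obtain i j where p: "p = (i, j)" "i \<in> A - B" "j \<in> A - B" "i \<noteq> j"
      using off_B by auto
    then have "B - (A - {i, j}) = B - A" "A - {i, j} - B = A - B - {i, j}"
      by auto
    with p assms show ?thesis
      by (simp add: berezin_psibar_psi_tau gsmult_def)
  qed
  ultimately show "gsum (\<lambda>p. berezin B t (case p of (i, j) \<Rightarrow> gmul (gmul (psibar i) (psi j))
      (tau (A - {i, j})))) (?pairs A) S = gsmult (\<Prod>i\<in>B - A. t i)
      (gsum (\<lambda>(i, j). gmul (gmul (psibar i) (psi j)) (tau (A - B - {i, j}))) (?pairs (A - B))) S"
    unfolding gsum_def gsmult_def sum_distrib_left
    by (intro sum.mono_neutral_cong_right finite_off_diagonal assms) auto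
qed

lemma berezin_fA:
  fixes A B :: "'v::linorder set"
  assumes "finite A" "finite B"
  shows "berezin B t (fA lam A) =
    gsmult (\<Prod>i\<in>B - A. t i) (gadd (fA lam (A - B)) (gsmult (\<Sum>i\<in>B \<inter> A. t i - lam) (tau (A - B))))"
proof -
  have card_A: "card A = card (A \<inter> B) + card (A - B)"
    using assms(1) by (rule card_Int_Diff)
  have sum_Int: "(\<Sum>i\<in>B \<inter> A. t i - lam) = (\<Sum>i\<in>A \<inter> B. t i) - of_nat (card (A \<inter> B)) * lam"
    by (simp add: sum_subtractf Int_commute)
  show ?thesis
    unfolding sum_Int fA_def berezin_gminus[OF assms(2)] berezin_gadd[OF assms(2)] berezin_gsmult[OF assms(2)]
      berezin_gsum[OF assms(2,1)] berezin_gsum[OF assms(2) finite_off_diagonal[OF assms(1)]]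
      berezin_tau[OF assms(2,1)] berezin_sum_tau_remove[OF assms] berezin_sum_psibar_psi_tau[OF assms]
    by (intro ext) (simp add: gminus_def gadd_def gsmult_def gsum_def split_def sum_distrib_left
        sum_distrib_right card_A algebra_simps)
qed

theorem corollary5p2:
  fixes V A B :: "'v::linorder set" and t :: "'v \<Rightarrow> complex" and lam :: complex
  assumes "finite V" and "A \<subseteq> V" and "B \<subseteq> V"
  shows "berezin B t (fA lam A) =
           gsmult (\<Prod>i\<in>B - A. t i)
             (gadd (fA lam (A - B)) (gsmult (\<Sum>i\<in>B \<inter> A. t i - lam) (tau (A - B)))) \<and>
         berezin A t (fA lam A) = gconst (lam + (\<Sum>i\<in>A. t i - lam))"
proof
  have "finite A" "finite B"
    using assms finite_subset by auto
  then show "berezin B t (fA lam A) =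
      gsmult (\<Prod>i\<in>B - A. t i) (gadd (fA lam (A - B)) (gsmult (\<Sum>i\<in>B \<inter> A. t i - lam) (tau (A - B))))"
    by (rule berezin_fA)
  show "berezin A t (fA lam A) = gconst (lam + (\<Sum>i\<in>A. t i - lam))"
    unfolding berezin_fA[OF \<open>finite A\<close> \<open>finite A\<close>]
    by (auto simp: fA_def tau_eq_gmonomial gminus_def gadd_def gsmult_def gsum_def
        gmonomial_def gconst_def)
qed

end
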